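(* Let $\lambda>0$, let $f(x)=\lambda e^{-\lambda x}$ ($x\geq 0$) be the exponential density with hazard rate $\lambda$, and let $X$ have the $\Gamma(n,\lambda)$ distribution (density $\lambda^n x^{n-1}e^{-\lambda x}/(n-1)!$) with integer $n\geq 2$. For every integer $s\geq 2$, the density $g_s$ of the $s$-iterated distribution induced by $X$ satisfies $$g_s(x)=f_s^{n*}(x)=\frac{n-1}{n+s-2}\,f\ast f_s^{(n-1)*}(x)+\frac{s-1}{n+s-2}\,f(x),\qquad x\geq 0.$$
   Context: For a nonnegative absolutely continuous random variable $Y$ with density $f_Y$, set $\overline{T}_{Y,0}=f_Y$, $\mu_{Y,0}=1$, and for integers $s\geq 1$ define recursively $\overline{T}_{Y,s}(x)=\frac{1}{\mu_{Y,s-1}}\int_x^\infty\overline{T}_{Y,s-1}(t)\,dt$ and $\mu_{Y,s}=\int_0^\infty\overline{T}_{Y,s}(t)\,dt$. $\overline{T}_{Y,s}$ is the tail of the $s$-iterated distribution induced by $Y$, whose density is $\overline{T}_{Y,s-1}/\mu_{Y,s-1}$. For $k\geq 1$, $f_s^{k*}$ denotes the density of the $s$-iterated distribution induced by $S_k=X_1+\cdots+X_k$, where $X_i$ are i.i.d. with density $f$ (so $S_k\sim\Gamma(k,\lambda)$). Convolution: $g\ast h(x)=\int_0^x g(t)h(x-t)\,dt$. *)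

theory Defs
  imports "HOL-Analysis.Analysis"
begin

definition gamma_dens :: "nat \<Rightarrow> real \<Rightarrow> real \<Rightarrow> real" where
  "gamma_dens k l x =
     (if x \<ge> 0 then l ^ k * x ^ (k - 1) * exp (- l * x) / fact (k - 1) else 0)"

fun iter_tail :: "(real \<Rightarrow> real) \<Rightarrow> nat \<Rightarrow> (real \<Rightarrow> real) \<times> real" where
  "iter_tail f 0 = (f, 1)"
| "iter_tail f (Suc s) =
     (let T = fst (iter_tail f s); m = snd (iter_tail f s);
          T' = (\<lambda>x. integral {x..} T / m)
      in (T', integral {0..} T'))"

definition Tbar :: "(real \<Rightarrow> real) \<Rightarrow> nat \<Rightarrow> real \<Rightarrow> real" where
  "Tbar f s = fst (iter_tail f s)"

definition mu :: "(real \<Rightarrow> real) \<Rightarrow> nat \<Rightarrow> real" where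
  "mu f s = snd (iter_tail f s)"

definition iter_density :: "(real \<Rightarrow> real) \<Rightarrow> nat \<Rightarrow> real \<Rightarrow> real" where
  "iter_density f s x = Tbar f (s - 1) x / mu f (s - 1)"

definition conv :: "(real \<Rightarrow> real) \<Rightarrow> (real \<Rightarrow> real) \<Rightarrow> real \<Rightarrow> real" where
  "conv g h x = integral {0..x} (\<lambda>t. g t * h (x - t))"

end

theory Submission
  imports Defs
begin

text \<open>
  The \<open>\<Gamma>(N+1, l)\<close> density is the Erlang density \<open>q_N\<close>, where
  \<open>q_k(t) = l^(k+1) t^k e^(-l t) / k!\<close>, and the tail integral of \<open>q_k\<close> from \<open>x\<close> is
  \<open>(q_0(x) + ... + q_k(x)) / l\<close>. Hence every iterated tail of \<open>\<Gamma>(N+1, l)\<close> is a positive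
  mixture of \<open>q_0, ..., q_N\<close>, and by the hockey-stick identity the \<open>s\<close>-iterated density
  has the weights \<open>C(N-k+s-2, N-k)\<close>, normalised by \<open>C(N+s-1, N)\<close>. Since
  \<open>q_0 * q_k = q_(k+1)\<close>, the mixture for \<open>N+1\<close> without its \<open>q_0\<close> term is the convolution
  of \<open>f = q_0\<close> with the mixture for \<open>N\<close>; the coefficients of the theorem then come from
  two binomial identities.
\<close>

text \<open>The \<open>\<Gamma>(k+1, l)\<close> density, without the truncation at 0 so that it is smooth on all reals.\<close>
definition erlang_pdf :: "real \<Rightarrow> nat \<Rightarrow> real \<Rightarrow> real" where
  "erlang_pdf l k t = l ^ Suc k * t ^ k * exp (- l * t) / fact k"

definition erlang_mix :: "real \<Rightarrow> (nat \<Rightarrow> real) \<Rightarrow> nat \<Rightarrow> real \<Rightarrow> real" where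
  "erlang_mix l a N t = (\<Sum>k\<le>N. a k * erlang_pdf l k t)"

lemma gamma_dens_Suc_eq_erlang_pdf: "t \<ge> 0 \<Longrightarrow> gamma_dens (Suc k) l t = erlang_pdf l k t"
  by (simp add: gamma_dens_def erlang_pdf_def)

lemma erlang_pdf_nonneg: "l > 0 \<Longrightarrow> t \<ge> 0 \<Longrightarrow> erlang_pdf l k t \<ge> 0"
  by (simp add: erlang_pdf_def)

lemma erlang_pdf_at_0: "erlang_pdf l k 0 = (if k = 0 then l else 0)"
  by (simp add: erlang_pdf_def)

lemma continuous_on_erlang_pdf: "continuous_on A (erlang_pdf l k)"
  unfolding erlang_pdf_def by (intro continuous_intros) auto

lemma erlang_pdf_tendsto_0:
  assumes "l > 0"
  shows "(erlang_pdf l k \<longlongrightarrow> 0) at_top"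
proof -
  have "erlang_pdf l k = (\<lambda>t. l / fact k * ((l * t) ^ k / exp (l * t)))"
    by (simp add: erlang_pdf_def exp_minus field_simps fun_eq_iff)
  moreover have "((\<lambda>t. (l * t) ^ k / exp (l * t)) \<longlongrightarrow> 0) at_top"
    by (rule filterlim_compose[OF tendsto_power_div_exp_0
          filterlim_tendsto_pos_mult_at_top[OF tendsto_const assms filterlim_ident]])
  ultimately show ?thesis
    using tendsto_mult_right_zero by metis
qed

lemma erlang_pdf_0_has_real_derivative:
  "(erlang_pdf l 0 has_real_derivative - l * erlang_pdf l 0 t) (at t)"
  unfolding erlang_pdf_def by (auto intro!: derivative_eq_intros)

lemma erlang_pdf_Suc_has_real_derivative:
  "(erlang_pdf l (Suc k) has_real_derivative l * erlang_pdf l k t - l * erlang_pdf l (Suc k) t) (at t)"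
proof -
  have "(erlang_pdf l (Suc k) has_real_derivative
      (l ^ Suc (Suc k) * (real (Suc k) * t ^ k) * exp (- l * t)
       + l ^ Suc (Suc k) * t ^ Suc k * (exp (- l * t) * (- l))) / fact (Suc k)) (at t)"
    unfolding erlang_pdf_def by (auto intro!: derivative_eq_intros simp del: fact_Suc power_Suc)
  moreover have "(l ^ Suc (Suc k) * (real (Suc k) * t ^ k) * exp (- l * t)
       + l ^ Suc (Suc k) * t ^ Suc k * (exp (- l * t) * (- l))) / fact (Suc k)
      = l * erlang_pdf l k t - l * erlang_pdf l (Suc k) t"
    unfolding erlang_pdf_def by (simp add: field_simps del: of_nat_Suc)
  ultimately show ?thesis by simp
qed

lemma erlang_pdf_partial_sum_has_real_derivative:
  "((\<lambda>t. \<Sum>i\<le>k. erlang_pdf l i t) has_real_derivative - l * erlang_pdf l k t) (at t)"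
proof (induction k)
  case 0
  then show ?case using erlang_pdf_0_has_real_derivative by simp
next
  case (Suc k)
  from DERIV_add[OF Suc erlang_pdf_Suc_has_real_derivative[of l k t]]
  show ?case by (simp add: algebra_simps)
qed

lemma has_integral_erlang_pdf_tail:
  assumes "l > 0" and "c \<ge> 0"
  shows "(erlang_pdf l k has_integral (\<Sum>i\<le>k. erlang_pdf l i c) / l) {c..}"
proof (rule has_integral_to_inf)
  define F where "F t = - (\<Sum>i\<le>k. erlang_pdf l i t) / l" for t
  show "erlang_pdf l k integrable_on {c..y}" for y
    by (intro integrable_continuous_interval continuous_on_erlang_pdf)
  show "erlang_pdf l k y \<ge> 0" if "y \<ge> c" for y
    using that assms erlang_pdf_nonneg by auto
  have "(F has_real_derivative - (- l * erlang_pdf l k t) / l) (at t)" for t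
    unfolding F_def by (intro DERIV_cdivide DERIV_minus erlang_pdf_partial_sum_has_real_derivative)
  then have "(F has_real_derivative erlang_pdf l k t) (at t)" for t
    using assms(1) by simp
  then have "(erlang_pdf l k has_integral F y - F c) {c..y}" if "c \<le> y" for y
    by (intro fundamental_theorem_of_calculus that)
       (auto simp: has_real_derivative_iff_has_vector_derivative intro: has_vector_derivative_at_within)
  then have "\<forall>\<^sub>F y in at_top. F y - F c = integral {c..y} (erlang_pdf l k)"
    unfolding eventually_at_top_linorder by (intro exI[of _ c]) (auto intro: integral_unique[symmetric])
  moreover have "((\<lambda>y. F y - F c) \<longlongrightarrow> - 0 / l - F c) at_top"
    unfolding F_def
    using assms(1) by (intro tendsto_intros tendsto_null_sum[OF erlang_pdf_tendsto_0]) auto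
  ultimately show "((\<lambda>y. integral {c..y} (erlang_pdf l k)) \<longlongrightarrow> (\<Sum>i\<le>k. erlang_pdf l i c) / l) at_top"
    by (auto simp: F_def elim: Lim_transform_eventually)
qed

lemma has_integral_erlang_pdf_convolution:
  assumes "x \<ge> 0"
  shows "((\<lambda>t. erlang_pdf l 0 t * erlang_pdf l k (x - t)) has_integral erlang_pdf l (Suc k) x) {0..x}"
proof -
  define C where "C = l ^ Suc (Suc k) * exp (- l * x)"
  have integrand: "erlang_pdf l 0 t * erlang_pdf l k (x - t) = C * (x - t) ^ k / fact k" for t
  proof -
    have "exp (- l * t) * exp (- l * (x - t)) = exp (- l * x)"
      by (simp flip: exp_add add: algebra_simps)
    then show ?thesis
      unfolding erlang_pdf_def C_def by (simp add: mult_ac)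
  qed
  have "((\<lambda>t. - C * (x - t) ^ Suc k / fact (Suc k)) has_real_derivative
      - C * (real (Suc k) * (x - t) ^ k * (0 - 1)) / fact (Suc k)) (at t within {0..x})" for t
    by (auto intro!: derivative_eq_intros simp del: fact_Suc power_Suc of_nat_Suc)
  moreover have "- C * (real (Suc k) * (x - t) ^ k * (0 - 1)) / fact (Suc k) = C * (x - t) ^ k / fact k"
    for t by (simp add: fact_Suc[of k] del: of_nat_Suc)
  ultimately have "((\<lambda>t. C * (x - t) ^ k / fact k) has_integral
      (- C * (x - x) ^ Suc k / fact (Suc k)) - (- C * (x - 0) ^ Suc k / fact (Suc k))) {0..x}"
    by (intro fundamental_theorem_of_calculus assms)
       (simp add: has_real_derivative_iff_has_vector_derivative)
  then show ?thesis
    unfolding integrand by (simp add: erlang_pdf_def C_def mult_ac)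
qed

lemma sum_mult_sum_atMost_swap:
  fixes a b :: "nat \<Rightarrow> 'a::comm_semiring_1"
  shows "(\<Sum>k\<le>N. a k * (\<Sum>i\<le>k. b i)) = (\<Sum>i\<le>N. (\<Sum>k=i..N. a k) * b i)"
proof -
  have "(\<Sum>k\<le>N. a k * (\<Sum>i\<le>k. b i)) = (\<Sum>k\<le>N. \<Sum>i\<in>{i\<in>{..N}. i \<le> k}. a k * b i)"
    by (intro sum.cong) (auto simp: sum_distrib_left intro!: sum.cong)
  also have "\<dots> = (\<Sum>i\<le>N. \<Sum>k\<in>{k\<in>{..N}. i \<le> k}. a k * b i)"
    by (rule sum.swap_restrict) auto
  also have "\<dots> = (\<Sum>i\<le>N. (\<Sum>k=i..N. a k) * b i)"
    by (intro sum.cong) (auto simp: sum_distrib_right intro!: sum.cong)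
  finally show ?thesis .
qed

lemma erlang_mix_cong: "(\<And>k. k \<le> N \<Longrightarrow> a k = b k) \<Longrightarrow> erlang_mix l a N = erlang_mix l b N"
  unfolding erlang_mix_def by (intro ext sum.cong) auto

lemma erlang_mix_at_0: "erlang_mix l a N 0 = l * a 0"
  by (simp add: erlang_mix_def erlang_pdf_at_0 if_distrib cong: if_cong)

lemma has_integral_erlang_mix_tail:
  assumes "l > 0" and "x \<ge> 0"
  shows "(erlang_mix l a N has_integral erlang_mix l (\<lambda>i. \<Sum>k=i..N. a k) N x / l) {x..}"
proof -
  have "(erlang_mix l a N has_integral (\<Sum>k\<le>N. a k * ((\<Sum>i\<le>k. erlang_pdf l i x) / l))) {x..}"
    unfolding erlang_mix_def
    by (intro has_integral_sum has_integral_mult_right has_integral_erlang_pdf_tail assms) auto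
  also have "(\<Sum>k\<le>N. a k * ((\<Sum>i\<le>k. erlang_pdf l i x) / l)) = erlang_mix l (\<lambda>i. \<Sum>k=i..N. a k) N x / l"
    by (simp add: erlang_mix_def sum_mult_sum_atMost_swap sum_divide_distrib flip: times_divide_eq_right)
  finally show ?thesis .
qed

lemma has_integral_erlang_mix:
  assumes "l > 0"
  shows "(erlang_mix l a N has_integral (\<Sum>k\<le>N. a k)) {0..}"
  using has_integral_erlang_mix_tail[OF assms order_refl, of a N] assms
  by (simp add: erlang_mix_at_0 atLeast0AtMost)

lemma conv_exponential_erlang_mix:
  assumes "x \<ge> 0" and "\<forall>t\<ge>0. g t = erlang_mix l a N t / D"
  shows "conv (gamma_dens 1 l) g x = (\<Sum>k\<le>N. a k * erlang_pdf l (Suc k) x) / D"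
proof -
  have "conv (gamma_dens 1 l) g x
      = integral {0..x} (\<lambda>t. \<Sum>k\<le>N. a k / D * (erlang_pdf l 0 t * erlang_pdf l k (x - t)))"
    unfolding conv_def
    by (intro integral_cong)
       (simp add: assms(2) gamma_dens_Suc_eq_erlang_pdf[where k = 0, simplified] erlang_mix_def
         sum_divide_distrib sum_distrib_left mult_ac)
  also have "\<dots> = (\<Sum>k\<le>N. a k / D * erlang_pdf l (Suc k) x)"
    by (intro integral_unique has_integral_sum has_integral_mult_right
          has_integral_erlang_pdf_convolution assms) auto
  finally show ?thesis
    by (simp add: sum_divide_distrib)
qed

lemma Tbar_0: "Tbar f 0 = f" and mu_0: "mu f 0 = 1"
  by (simp_all add: Tbar_def mu_def)

lemma Tbar_Suc: "Tbar f (Suc m) x = integral {x..} (Tbar f m) / mu f m"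
  and mu_Suc: "mu f (Suc m) = integral {0..} (Tbar f (Suc m))"
  by (simp_all add: Tbar_def mu_def Let_def)

lemma Tbar_Suc_erlang_mix:
  assumes "l > 0" and Tbar_m: "\<forall>t\<ge>0. Tbar f m t = c * erlang_mix l a N t"
  shows "\<forall>x\<ge>0. Tbar f (Suc m) x = c / (l * mu f m) * erlang_mix l (\<lambda>i. \<Sum>k=i..N. a k) N x"
    and "mu f (Suc m) = c / (l * mu f m) * (\<Sum>i\<le>N. \<Sum>k=i..N. a k)"
proof -
  show Tbar_Suc_m: "\<forall>x\<ge>0. Tbar f (Suc m) x = c / (l * mu f m) * erlang_mix l (\<lambda>i. \<Sum>k=i..N. a k) N x"
  proof (intro allI impI)
    fix x :: real
    assume "x \<ge> 0"
    then have "((\<lambda>t. c * erlang_mix l a N t) has_integral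
        c * (erlang_mix l (\<lambda>i. \<Sum>k=i..N. a k) N x / l)) {x..}"
      by (intro has_integral_mult_right has_integral_erlang_mix_tail assms(1))
    then have "(Tbar f m has_integral c * (erlang_mix l (\<lambda>i. \<Sum>k=i..N. a k) N x / l)) {x..}"
      using Tbar_m \<open>x \<ge> 0\<close> by (subst has_integral_cong) auto
    then show "Tbar f (Suc m) x = c / (l * mu f m) * erlang_mix l (\<lambda>i. \<Sum>k=i..N. a k) N x"
      by (simp add: Tbar_Suc integral_unique)
  qed
  have "((\<lambda>t. c / (l * mu f m) * erlang_mix l (\<lambda>i. \<Sum>k=i..N. a k) N t) has_integral
      c / (l * mu f m) * (\<Sum>i\<le>N. \<Sum>k=i..N. a k)) {0..}"
    by (intro has_integral_mult_right has_integral_erlang_mix assms(1))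
  then have "(Tbar f (Suc m) has_integral c / (l * mu f m) * (\<Sum>i\<le>N. \<Sum>k=i..N. a k)) {0..}"
    using Tbar_Suc_m by (subst has_integral_cong) auto
  then show "mu f (Suc m) = c / (l * mu f m) * (\<Sum>i\<le>N. \<Sum>k=i..N. a k)"
    by (simp add: mu_Suc integral_unique)
qed

text \<open>\<open>iter_weight N m k\<close> is the weight of \<open>erlang_pdf l k\<close> in \<open>Tbar (gamma_dens (Suc N) l) (Suc m)\<close>.\<close>
definition iter_weight :: "nat \<Rightarrow> nat \<Rightarrow> nat \<Rightarrow> real" where
  "iter_weight N m k = real ((N - k + m) choose (N - k))"

lemma sum_iter_weight_from:
  assumes "i \<le> N"
  shows "(\<Sum>k=i..N. iter_weight N m k) = iter_weight N (Suc m) i"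
proof -
  have "(\<Sum>k=i..N. iter_weight N m k) = (\<Sum>d\<le>N - i. real ((m + d) choose d))"
    unfolding iter_weight_def
    by (rule sum.reindex_bij_witness[where i = "\<lambda>d. N - d" and j = "\<lambda>k. N - k"])
       (use assms in \<open>auto simp: add.commute\<close>)
  also have "\<dots> = real (Suc (m + (N - i)) choose (N - i))"
    unfolding of_nat_sum[symmetric] sum_choose_lower ..
  also have "\<dots> = iter_weight N (Suc m) i"
    by (simp add: iter_weight_def add_ac)
  finally show ?thesis .
qed

lemma sum_iter_weight: "(\<Sum>k\<le>N. iter_weight N m k) = real (N + Suc m choose N)"
  using sum_iter_weight_from[of 0 N m] by (simp add: iter_weight_def atLeast0AtMost)

lemma Tbar_gamma_dens:
  assumes "l > 0"
  shows "\<exists>c>0. (\<forall>x\<ge>0. Tbar (gamma_dens (Suc N) l) (Suc m) x = c * erlang_mix l (iter_weight N m) N x)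
           \<and> mu (gamma_dens (Suc N) l) (Suc m) = c * real (N + Suc m choose N)"
proof (induction m)
  case 0
  let ?a = "\<lambda>k. if k = N then 1 else 0 :: real"
  have "\<forall>t\<ge>0. Tbar (gamma_dens (Suc N) l) 0 t = 1 * erlang_mix l ?a N t"
    by (simp add: Tbar_0 gamma_dens_Suc_eq_erlang_pdf erlang_mix_def
        if_distrib[where f = "\<lambda>c. c * _"] cong: if_cong)
  note step = Tbar_Suc_erlang_mix[OF assms this]
  have "(\<Sum>k=i..N. ?a k) = iter_weight N 0 i" if "i \<le> N" for i
    using that by (simp add: iter_weight_def if_distrib cong: if_cong)
  then have "erlang_mix l (\<lambda>i. \<Sum>k=i..N. ?a k) N = erlang_mix l (iter_weight N 0) N"
    and "(\<Sum>i\<le>N. \<Sum>k=i..N. ?a k) = real (N + Suc 0 choose N)"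
    by (auto simp: sum_iter_weight[symmetric] intro: erlang_mix_cong sum.cong)
  with step assms show ?case
    by (intro exI[of _ "1 / l"]) (simp add: mu_0)
next
  case (Suc m)
  then obtain c where "c > 0"
    and Tbar_m: "\<forall>x\<ge>0. Tbar (gamma_dens (Suc N) l) (Suc m) x = c * erlang_mix l (iter_weight N m) N x"
    and mu_m: "mu (gamma_dens (Suc N) l) (Suc m) = c * real (N + Suc m choose N)"
    by blast
  note step = Tbar_Suc_erlang_mix[OF assms Tbar_m]
  have "erlang_mix l (\<lambda>i. \<Sum>k=i..N. iter_weight N m k) N = erlang_mix l (iter_weight N (Suc m)) N"
    by (intro erlang_mix_cong sum_iter_weight_from)
  moreover have "(\<Sum>i\<le>N. \<Sum>k=i..N. iter_weight N m k) = real (N + Suc (Suc m) choose N)"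
    unfolding sum_iter_weight[symmetric] by (intro sum.cong) (simp_all add: sum_iter_weight_from)
  moreover have "c / (l * mu (gamma_dens (Suc N) l) (Suc m)) > 0"
    using \<open>c > 0\<close> assms by (simp add: mu_m)
  ultimately show ?case
    using step by (intro exI[of _ "c / (l * mu (gamma_dens (Suc N) l) (Suc m))"]) simp
qed

lemma iter_density_gamma_dens:
  assumes "l > 0" and "x \<ge> 0"
  shows "iter_density (gamma_dens (Suc N) l) (Suc (Suc m)) x
    = erlang_mix l (iter_weight N m) N x / real (N + Suc m choose N)"
  using Tbar_gamma_dens[OF assms(1), of N m] assms(2) by (auto simp: iter_density_def)

lemma binomial_weights_split:
  fixes y z :: real
  shows "(real (Suc p + m choose Suc p) * z + y) / real (Suc p + Suc m choose Suc p)
    = real (Suc p) / real (p + m + 2) * (y / real (p + Suc m choose p))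
      + real (Suc m) / real (p + m + 2) * z"
proof -
  have "Suc p * (Suc p + Suc m choose Suc p) = (p + m + 2) * (p + Suc m choose p)"
    using Suc_times_binomial[of p "p + Suc m"] by simp
  moreover have "Suc m * (Suc p + Suc m choose Suc p) = (p + m + 2) * (Suc p + m choose Suc p)"
    using binomial_absorb_comp[of "p + m + 2" "Suc p"] by (simp add: add_ac)
  ultimately have "real (Suc p) * real (Suc p + Suc m choose Suc p) = real (p + m + 2) * real (p + Suc m choose p)"
    and "real (Suc m) * real (Suc p + Suc m choose Suc p) = real (p + m + 2) * real (Suc p + m choose Suc p)"
    by (simp_all only: of_nat_mult[symmetric])
  then show ?thesis
    by (simp add: field_simps del: of_nat_Suc binomial_Suc_Suc)
qed

theorem proposition2:
  fixes l :: real and n s :: nat and x :: real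
  assumes "l > 0" and "n \<ge> 2" and "s \<ge> 2" and "x \<ge> 0"
  shows "iter_density (gamma_dens n l) s x =
           real (n - 1) / real (n + s - 2) *
             conv (gamma_dens 1 l) (iter_density (gamma_dens (n - 1) l) s) x
           + real (s - 1) / real (n + s - 2) * gamma_dens 1 l x"
proof -
  obtain p m where n: "n = Suc (Suc p)" and s: "s = Suc (Suc m)"
    using assms(2,3) by (metis add_2_eq_Suc le_Suc_ex)
  define y where "y = (\<Sum>k\<le>p. iter_weight p m k * erlang_pdf l (Suc k) x)"
  have "iter_density (gamma_dens n l) s x
      = (real (Suc p + m choose Suc p) * erlang_pdf l 0 x + y) / real (Suc p + Suc m choose Suc p)"
    unfolding n s iter_density_gamma_dens[OF assms(1,4)] erlang_mix_def sum.atMost_Suc_shift y_def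
    by (simp add: iter_weight_def del: binomial_Suc_Suc)
  moreover have "conv (gamma_dens 1 l) (iter_density (gamma_dens (n - 1) l) s) x
      = y / real (p + Suc m choose p)"
    unfolding n s y_def using iter_density_gamma_dens[OF assms(1)]
    by (intro conv_exponential_erlang_mix assms(4)) auto
  moreover have "gamma_dens 1 l x = erlang_pdf l 0 x"
    using gamma_dens_Suc_eq_erlang_pdf[OF assms(4), of 0] by simp
  ultimately show ?thesis
    using binomial_weights_split[of p m "erlang_pdf l 0 x" y]
    by (simp add: n s del: binomial_Suc_Suc)
qed

end
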